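(* Let $(D,H,P)$ be a market, and let $(\iota,\kappa)$ be an interview arrangement that is adequate at $P$. Let $\kappa'=(\kappa'_d)_{d\in D}$ be doctor interview capacities such that $\kappa'_d\ge \kappa_d$ for every $d\in D$. Let $\mu$ be the $(\iota,\kappa)$-matching and $\mu'$ the $(\iota,\kappa')$-matching at $P$. Then no doctor prefers $\mu'$ to $\mu$; that is, for every $d\in D$, $\mu(d)\mathrel{R_d}\mu'(d)$ (where $R_d$ is the weak relation associated with $P_d$).
   Context: A market is a triple $(D,H,P)$ where $D$ (doctors) and $H$ (hospitals) are finite sets with $|D|\ge 2$, $|H|\ge 2$; each $h\in H$ has a strict preference $P_h$ over $D\cup\{h\}$ and each $d\in D$ has a strict preference $P_d$ over $H\cup\{d\}$ (being matched to oneself means being unmatched; a partner ranked below oneself is unacceptable). A matching is $\mu:H\cup D\to H\cup D$ with $\mu(h)\in D\cup\{h\}$, $\mu(d)\in H\cup\{d\}$, and $\mu(d)=h$ iff $\mu(h)=d$. A pair $(d,h)$ blocks $\mu$ if $h\mathrel{P_d}\mu(d)$ and $d\mathrel{P_h}\mu(h)$; $\mu$ is stable if it has no blocking pair. An interview arrangement is $(\iota,\kappa)$ with $\iota_h\in\mathbb N$ the interview capacity of each $h\in H$ and $\kappa_d\in\mathbb N$ that of each $d\in D$. An interview matching is a many-to-many matching $\nu$ ($\nu(d)\subseteq H$, $\nu(h)\subseteq D$, $h\in\nu(d)$ iff $d\in\nu(h)$) with $|\nu(d)|\le\kappa_d$ and $|\nu(h)|\le\iota_h$. The $(\iota,\kappa)$-matching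 at $P$ is obtained in two steps. Step 1: $\nu$ is the hospital-optimal pairwise stable interview matching, computed by hospital-proposing deferred acceptance in which each agent's choice function from a set of proposals selects its acceptable partners in that set if there are at most its capacity of them, and otherwise its capacity-many best ones according to its preference (responsive, acceptant choice). Step 2: the final matching is the outcome of doctor-proposing deferred acceptance with each agent's preference restricted to $\nu$ (each agent $i$ ranks only the agents in $\nu(i)$, in the order given by $P_i$ and only if acceptable to $i$; all others are unacceptable). $(\iota,\kappa)$ is adequate at $P$ if the $(\iota,\kappa)$-matching at $P$ is stable with respect to the true preferences $P$. *)

theory Defs
  imports Main
begin

text \<open>A doctor's preference over H \<union> {d} is a relation on 'h option,
  None standing for the doctor herself (being unmatched); 'P x y' means x is strictly
  preferred to y. Likewise for hospitals over 'd option.\<close>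

definition strict_linear_on :: "'a set \<Rightarrow> ('a \<Rightarrow> 'a \<Rightarrow> bool) \<Rightarrow> bool" where
  "strict_linear_on A P \<longleftrightarrow>
     (\<forall>x\<in>A. \<not> P x x) \<and>
     (\<forall>x\<in>A. \<forall>y\<in>A. \<forall>z\<in>A. P x y \<longrightarrow> P y z \<longrightarrow> P x z) \<and>
     (\<forall>x\<in>A. \<forall>y\<in>A. x \<noteq> y \<longrightarrow> P x y \<or> P y x)"

definition market ::
  "'d set \<Rightarrow> 'h set \<Rightarrow> ('d \<Rightarrow> 'h option \<Rightarrow> 'h option \<Rightarrow> bool)
     \<Rightarrow> ('h \<Rightarrow> 'd option \<Rightarrow> 'd option \<Rightarrow> bool) \<Rightarrow> bool" where
  "market D H Pd Ph \<longleftrightarrow> finite D \<and> finite H \<and> card D \<ge> 2 \<and> card H \<ge> 2 \<and>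
     (\<forall>d\<in>D. strict_linear_on (Some ` H \<union> {None}) (Pd d)) \<and>
     (\<forall>h\<in>H. strict_linear_on (Some ` D \<union> {None}) (Ph h))"

definition dset :: "('d \<times> 'h) set \<Rightarrow> 'd \<Rightarrow> 'h set" where
  "dset M d = {h. (d, h) \<in> M}"

definition hset :: "('d \<times> 'h) set \<Rightarrow> 'h \<Rightarrow> 'd set" where
  "hset M h = {d. (d, h) \<in> M}"

definition matching :: "'d set \<Rightarrow> 'h set \<Rightarrow> ('d \<times> 'h) set \<Rightarrow> bool" where
  "matching D H M \<longleftrightarrow> M \<subseteq> D \<times> H \<and>
     (\<forall>d h h'. (d, h) \<in> M \<longrightarrow> (d, h') \<in> M \<longrightarrow> h = h') \<and>
     (\<forall>d d' h. (d, h) \<in> M \<longrightarrow> (d', h) \<in> M \<longrightarrow> d = d')"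

text \<open>Partner mu(d) of a doctor and mu(h) of a hospital (None = unmatched).\<close>

definition pd :: "('d \<times> 'h) set \<Rightarrow> 'd \<Rightarrow> 'h option" where
  "pd M d = (if \<exists>h. (d, h) \<in> M then Some (THE h. (d, h) \<in> M) else None)"

definition ph :: "('d \<times> 'h) set \<Rightarrow> 'h \<Rightarrow> 'd option" where
  "ph M h = (if \<exists>d. (d, h) \<in> M then Some (THE d. (d, h) \<in> M) else None)"

definition blocks ::
  "('d \<Rightarrow> 'h option \<Rightarrow> 'h option \<Rightarrow> bool) \<Rightarrow> ('h \<Rightarrow> 'd option \<Rightarrow> 'd option \<Rightarrow> bool)
     \<Rightarrow> ('d \<times> 'h) set \<Rightarrow> 'd \<Rightarrow> 'h \<Rightarrow> bool" where
  "blocks Pd Ph M d h \<longleftrightarrow> Pd d (Some h) (pd M d) \<and> Ph h (Some d) (ph M h)"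

definition stable ::
  "'d set \<Rightarrow> 'h set \<Rightarrow> ('d \<Rightarrow> 'h option \<Rightarrow> 'h option \<Rightarrow> bool)
     \<Rightarrow> ('h \<Rightarrow> 'd option \<Rightarrow> 'd option \<Rightarrow> bool) \<Rightarrow> ('d \<times> 'h) set \<Rightarrow> bool" where
  "stable D H Pd Ph M \<longleftrightarrow> matching D H M \<and>
     (\<forall>d\<in>D. \<forall>h\<in>H. \<not> blocks Pd Ph M d h)"

definition indiv_rational ::
  "('d \<Rightarrow> 'h option \<Rightarrow> 'h option \<Rightarrow> bool)
     \<Rightarrow> ('h \<Rightarrow> 'd option \<Rightarrow> 'd option \<Rightarrow> bool) \<Rightarrow> ('d \<times> 'h) set \<Rightarrow> bool" where
  "indiv_rational Pd Ph M \<longleftrightarrow>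
     (\<forall>(d, h)\<in>M. Pd d (Some h) None \<and> Ph h (Some d) None)"

definition choice :: "('a option \<Rightarrow> 'a option \<Rightarrow> bool) \<Rightarrow> nat \<Rightarrow> 'a set \<Rightarrow> 'a set" where
  "choice P k X =
     (let A = {x \<in> X. P (Some x) None} in
      if card A \<le> k then A else {x \<in> A. card {y \<in> A. P (Some y) (Some x)} < k})"

definition interview_matching ::
  "'d set \<Rightarrow> 'h set \<Rightarrow> ('h \<Rightarrow> nat) \<Rightarrow> ('d \<Rightarrow> nat) \<Rightarrow> ('d \<times> 'h) set \<Rightarrow> bool" where
  "interview_matching D H \<iota> \<kappa> N \<longleftrightarrow> N \<subseteq> D \<times> H \<and>
     (\<forall>d\<in>D. card (dset N d) \<le> \<kappa> d) \<and> (\<forall>h\<in>H. card (hset N h) \<le> \<iota> h)"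

definition pairwise_stable ::
  "'d set \<Rightarrow> 'h set \<Rightarrow> ('d \<Rightarrow> 'h option \<Rightarrow> 'h option \<Rightarrow> bool)
     \<Rightarrow> ('h \<Rightarrow> 'd option \<Rightarrow> 'd option \<Rightarrow> bool) \<Rightarrow> ('h \<Rightarrow> nat) \<Rightarrow> ('d \<Rightarrow> nat)
     \<Rightarrow> ('d \<times> 'h) set \<Rightarrow> bool" where
  "pairwise_stable D H Pd Ph \<iota> \<kappa> N \<longleftrightarrow> interview_matching D H \<iota> \<kappa> N \<and>
     (\<forall>d\<in>D. choice (Pd d) (\<kappa> d) (dset N d) = dset N d) \<and>
     (\<forall>h\<in>H. choice (Ph h) (\<iota> h) (hset N h) = hset N h) \<and>
     (\<forall>d\<in>D. \<forall>h\<in>H. (d, h) \<notin> N \<longrightarrow>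
        \<not> (h \<in> choice (Pd d) (\<kappa> d) (insert h (dset N d)) \<and>
           d \<in> choice (Ph h) (\<iota> h) (insert d (hset N h))))"

text \<open>Hospital-optimal pairwise stable interview matching (Blair order via choice).\<close>

definition hospital_optimal_ps ::
  "'d set \<Rightarrow> 'h set \<Rightarrow> ('d \<Rightarrow> 'h option \<Rightarrow> 'h option \<Rightarrow> bool)
     \<Rightarrow> ('h \<Rightarrow> 'd option \<Rightarrow> 'd option \<Rightarrow> bool) \<Rightarrow> ('h \<Rightarrow> nat) \<Rightarrow> ('d \<Rightarrow> nat)
     \<Rightarrow> ('d \<times> 'h) set \<Rightarrow> bool" where
  "hospital_optimal_ps D H Pd Ph \<iota> \<kappa> N \<longleftrightarrow> pairwise_stable D H Pd Ph \<iota> \<kappa> N \<and>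
     (\<forall>N'. pairwise_stable D H Pd Ph \<iota> \<kappa> N' \<longrightarrow>
        (\<forall>h\<in>H. choice (Ph h) (\<iota> h) (hset N h \<union> hset N' h) = hset N h))"

definition step1 ::
  "'d set \<Rightarrow> 'h set \<Rightarrow> ('d \<Rightarrow> 'h option \<Rightarrow> 'h option \<Rightarrow> bool)
     \<Rightarrow> ('h \<Rightarrow> 'd option \<Rightarrow> 'd option \<Rightarrow> bool) \<Rightarrow> ('h \<Rightarrow> nat) \<Rightarrow> ('d \<Rightarrow> nat)
     \<Rightarrow> ('d \<times> 'h) set" where
  "step1 D H Pd Ph \<iota> \<kappa> = (THE N. hospital_optimal_ps D H Pd Ph \<iota> \<kappa> N)"

definition restrict_pref ::
  "('a option \<Rightarrow> 'a option \<Rightarrow> bool) \<Rightarrow> 'a set \<Rightarrow> 'a option \<Rightarrow> 'a option \<Rightarrow> bool" where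
  "restrict_pref P S x y =
     (let T = Some ` {a \<in> S. P (Some a) None} \<union> {None} in
      if x \<in> T \<and> y \<in> T then P x y else x \<in> T \<and> y \<notin> T)"

text \<open>Outcome of doctor-proposing deferred acceptance = doctor-optimal stable matching
  (Gale--Shapley).\<close>

definition doctor_optimal_stable ::
  "'d set \<Rightarrow> 'h set \<Rightarrow> ('d \<Rightarrow> 'h option \<Rightarrow> 'h option \<Rightarrow> bool)
     \<Rightarrow> ('h \<Rightarrow> 'd option \<Rightarrow> 'd option \<Rightarrow> bool) \<Rightarrow> ('d \<times> 'h) set \<Rightarrow> bool" where
  "doctor_optimal_stable D H Pd Ph M \<longleftrightarrow>
     indiv_rational Pd Ph M \<and> stable D H Pd Ph M \<and>
     (\<forall>M'. indiv_rational Pd Ph M' \<and> stable D H Pd Ph M' \<longrightarrow>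
        (\<forall>d\<in>D. pd M d = pd M' d \<or> Pd d (pd M d) (pd M' d)))"

definition ik_matching ::
  "'d set \<Rightarrow> 'h set \<Rightarrow> ('d \<Rightarrow> 'h option \<Rightarrow> 'h option \<Rightarrow> bool)
     \<Rightarrow> ('h \<Rightarrow> 'd option \<Rightarrow> 'd option \<Rightarrow> bool) \<Rightarrow> ('h \<Rightarrow> nat) \<Rightarrow> ('d \<Rightarrow> nat)
     \<Rightarrow> ('d \<times> 'h) set" where
  "ik_matching D H Pd Ph \<iota> \<kappa> =
     (let \<nu> = step1 D H Pd Ph \<iota> \<kappa> in
      THE M. doctor_optimal_stable D H
        (\<lambda>d. restrict_pref (Pd d) (dset \<nu> d)) (\<lambda>h. restrict_pref (Ph h) (hset \<nu> h)) M)"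

definition adequate ::
  "'d set \<Rightarrow> 'h set \<Rightarrow> ('d \<Rightarrow> 'h option \<Rightarrow> 'h option \<Rightarrow> bool)
     \<Rightarrow> ('h \<Rightarrow> 'd option \<Rightarrow> 'd option \<Rightarrow> bool) \<Rightarrow> ('h \<Rightarrow> nat) \<Rightarrow> ('d \<Rightarrow> nat) \<Rightarrow> bool" where
  "adequate D H Pd Ph \<iota> \<kappa> \<longleftrightarrow> stable D H Pd Ph (ik_matching D H Pd Ph \<iota> \<kappa>)"

end

theory Submission
  imports Defs
begin

(* Let \<nu>, \<nu>' be the interview matchings and \<mu>, \<mu>' the final matchings for \<kappa> and \<kappa>'.
   Hospital-proposing deferred acceptance for \<kappa>' produces interviews that every hospital weakly
   prefers to those of any pairwise stable interview matching for smaller doctor capacities,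
   in particular to \<nu>; so no hospital loses an interview with a doctor it ranks above one it
   interviews in \<nu>'.  Suppose some doctors strictly prefer \<mu>' to \<mu>.  Stability of \<mu> (this
   is where adequacy enters) and of \<mu>' for \<nu>' show that the hospital such a doctor gets in
   \<mu>' was held in \<mu> by another such doctor, so these doctors merely exchange their hospitals,
   and their new partners were already interviews in \<nu>.  Letting them switch to \<mu>' while
   everybody else keeps \<mu> then gives a stable matching for \<nu> that they prefer to \<mu>,
   contradicting the doctor-optimality of \<mu>. *)

lemma strict_linear_on_subset: "strict_linear_on A P \<Longrightarrow> B \<subseteq> A \<Longrightarrow> strict_linear_on B P"
  unfolding strict_linear_on_def by (meson subsetD)

lemma strict_linear_on_cong:
  assumes "strict_linear_on A P" "\<And>x y. x \<in> A \<Longrightarrow> y \<in> A \<Longrightarrow> Q x y \<longleftrightarrow> P x y"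
  shows "strict_linear_on A Q"
  using assms unfolding strict_linear_on_def by blast

lemma strict_linear_on_irrefl: "strict_linear_on A P \<Longrightarrow> x \<in> A \<Longrightarrow> \<not> P x x"
  unfolding strict_linear_on_def by blast

lemma strict_linear_on_trans:
  "strict_linear_on A P \<Longrightarrow> x \<in> A \<Longrightarrow> y \<in> A \<Longrightarrow> z \<in> A \<Longrightarrow> P x y \<Longrightarrow> P y z \<Longrightarrow> P x z"
  unfolding strict_linear_on_def by blast

lemma strict_linear_on_total: "strict_linear_on A P \<Longrightarrow> x \<in> A \<Longrightarrow> y \<in> A \<Longrightarrow> x \<noteq> y \<Longrightarrow> P x y \<or> P y x"
  unfolding strict_linear_on_def by blast

lemma strict_linear_on_asym: "strict_linear_on A P \<Longrightarrow> x \<in> A \<Longrightarrow> y \<in> A \<Longrightarrow> P x y \<Longrightarrow> \<not> P y x"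
  unfolding strict_linear_on_def by blast

definition acceptable :: "('a option \<Rightarrow> 'a option \<Rightarrow> bool) \<Rightarrow> 'a \<Rightarrow> bool" where
  "acceptable P x \<longleftrightarrow> P (Some x) None"

text \<open>Restricted preferences are only linear on the acceptable partners, so the choice
  theory is developed under this weaker hypothesis.\<close>

definition acceptable_linear :: "'a set \<Rightarrow> ('a option \<Rightarrow> 'a option \<Rightarrow> bool) \<Rightarrow> bool" where
  "acceptable_linear U P \<longleftrightarrow> (\<forall>x\<in>U. \<forall>y\<in>U. \<forall>z\<in>U.
     acceptable P x \<longrightarrow> acceptable P y \<longrightarrow> acceptable P z \<longrightarrow>
     \<not> P (Some x) (Some x) \<and>
     (P (Some x) (Some y) \<longrightarrow> P (Some y) (Some z) \<longrightarrow> P (Some x) (Some z)) \<and>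
     (x \<noteq> y \<longrightarrow> P (Some x) (Some y) \<or> P (Some y) (Some x)))"

lemma strict_linear_on_acceptable_linear:
  assumes "strict_linear_on (Some ` U \<union> {None}) P"
  shows "acceptable_linear U P"
  unfolding acceptable_linear_def
proof (intro ballI impI conjI)
  fix x y z assume "x \<in> U" "y \<in> U" "z \<in> U"
  then have "Some x \<in> Some ` U \<union> {None}" "Some y \<in> Some ` U \<union> {None}" "Some z \<in> Some ` U \<union> {None}"
    by auto
  with assms show "\<not> P (Some x) (Some x)"
    and "P (Some x) (Some y) \<Longrightarrow> P (Some y) (Some z) \<Longrightarrow> P (Some x) (Some z)"
    and "x \<noteq> y \<Longrightarrow> P (Some x) (Some y) \<or> P (Some y) (Some x)"
    unfolding strict_linear_on_def by blast+
qed

lemma market_doctor_linear: "market D H Pd Ph \<Longrightarrow> d \<in> D \<Longrightarrow> acceptable_linear H (Pd d)"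
  unfolding market_def using strict_linear_on_acceptable_linear by blast

lemma market_hospital_linear: "market D H Pd Ph \<Longrightarrow> h \<in> H \<Longrightarrow> acceptable_linear D (Ph h)"
  unfolding market_def using strict_linear_on_acceptable_linear by blast

section \<open>Responsive choice\<close>

definition rank :: "('a option \<Rightarrow> 'a option \<Rightarrow> bool) \<Rightarrow> 'a set \<Rightarrow> 'a \<Rightarrow> nat" where
  "rank P X x = card {y \<in> X. acceptable P y \<and> P (Some y) (Some x)}"

lemma choice_subset: "choice P k X \<subseteq> X"
  unfolding choice_def Let_def by auto

lemma acceptable_if_chosen: "x \<in> choice P k X \<Longrightarrow> acceptable P x"
  unfolding choice_def Let_def acceptable_def by (auto split: if_splits)

lemma choice_le_capacity: "finite X \<Longrightarrow> card X \<le> k \<Longrightarrow> choice P k X = {x \<in> X. acceptable P x}"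
  unfolding choice_def Let_def acceptable_def
  by (metis (no_types, lifting) card_mono le_trans mem_Collect_eq subsetI)

context
  fixes U :: "'a set" and P :: "'a option \<Rightarrow> 'a option \<Rightarrow> bool"
  assumes lin: "acceptable_linear U P"
begin

lemma acceptable_irrefl: "x \<in> U \<Longrightarrow> acceptable P x \<Longrightarrow> \<not> P (Some x) (Some x)"
  using lin unfolding acceptable_linear_def by blast

lemma acceptable_trans:
  "x \<in> U \<Longrightarrow> y \<in> U \<Longrightarrow> z \<in> U \<Longrightarrow> acceptable P x \<Longrightarrow> acceptable P y \<Longrightarrow> acceptable P z \<Longrightarrow>
   P (Some x) (Some y) \<Longrightarrow> P (Some y) (Some z) \<Longrightarrow> P (Some x) (Some z)"
  using lin unfolding acceptable_linear_def by blast

lemma acceptable_total: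
  "x \<in> U \<Longrightarrow> y \<in> U \<Longrightarrow> acceptable P x \<Longrightarrow> acceptable P y \<Longrightarrow> x \<noteq> y \<Longrightarrow>
   P (Some x) (Some y) \<or> P (Some y) (Some x)"
  using lin unfolding acceptable_linear_def by blast

lemma acceptable_asym:
  "x \<in> U \<Longrightarrow> y \<in> U \<Longrightarrow> acceptable P x \<Longrightarrow> acceptable P y \<Longrightarrow>
   P (Some x) (Some y) \<Longrightarrow> \<not> P (Some y) (Some x)"
  using lin unfolding acceptable_linear_def by blast

context
  fixes X :: "'a set"
  assumes XU: "X \<subseteq> U" and fin: "finite X"
begin

lemma choice_eq_rank: "choice P k X = {x \<in> X. acceptable P x \<and> rank P X x < k}"
proof (cases "card {x \<in> X. acceptable P x} \<le> k")
  case True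
  have "rank P X x < k" if "x \<in> X" "acceptable P x" for x
  proof -
    have "{y \<in> X. acceptable P y \<and> P (Some y) (Some x)} \<subseteq> {y \<in> X. acceptable P y} - {x}"
      using acceptable_irrefl XU that by blast
    then have "rank P X x \<le> card ({y \<in> X. acceptable P y} - {x})"
      unfolding rank_def using fin by (simp add: card_mono)
    also have "\<dots> < card {y \<in> X. acceptable P y}"
      using that fin by (intro card_Diff1_less) auto
    finally show ?thesis using True by simp
  qed
  then show ?thesis using True unfolding choice_def Let_def acceptable_def by auto
next
  case False
  then show ?thesis unfolding choice_def Let_def rank_def acceptable_def by auto
qed

lemma rank_less_card: "x \<in> X \<Longrightarrow> acceptable P x \<Longrightarrow> rank P X x < card {y \<in> X. acceptable P y}"
  using choice_eq_rank[of "card {y \<in> X. acceptable P y}"]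
  unfolding choice_def Let_def acceptable_def by auto

lemma rank_strict_mono:
  assumes "x \<in> X" "acceptable P x" "y \<in> U" "acceptable P y" "P (Some x) (Some y)"
  shows "rank P X x < rank P X y"
proof -
  have "{z \<in> X. acceptable P z \<and> P (Some z) (Some x)} \<subset> {z \<in> X. acceptable P z \<and> P (Some z) (Some y)}"
    using acceptable_trans acceptable_irrefl assms XU by blast
  then show ?thesis unfolding rank_def using fin by (simp add: psubset_card_mono)
qed

lemma inj_on_rank: "inj_on (rank P X) {x \<in> X. acceptable P x}"
proof (rule inj_onI)
  fix x y assume x: "x \<in> {x \<in> X. acceptable P x}" and y: "y \<in> {x \<in> X. acceptable P x}"
    and eq: "rank P X x = rank P X y"
  show "x = y"
  proof (rule ccontr)
    assume "x \<noteq> y"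
    then have "P (Some x) (Some y) \<or> P (Some y) (Some x)" using acceptable_total x y XU by blast
    then show False using rank_strict_mono[of x y] rank_strict_mono[of y x] x y XU eq by auto
  qed
qed

lemma card_choice: "card (choice P k X) = min k (card {x \<in> X. acceptable P x})"
proof -
  let ?A = "{x \<in> X. acceptable P x}"
  have ranks: "rank P X ` ?A = {..<card ?A}"
  proof (rule card_subset_eq)
    show "rank P X ` ?A \<subseteq> {..<card ?A}" using rank_less_card by auto
    show "card (rank P X ` ?A) = card {..<card ?A}" by (simp add: card_image inj_on_rank)
  qed simp
  have inj: "inj_on (rank P X) {x \<in> ?A. rank P X x < k}"
    using inj_on_rank by (rule inj_on_subset) auto
  have "rank P X ` {x \<in> ?A. rank P X x < k} = rank P X ` ?A \<inter> {..<k}" by auto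
  also have "\<dots> = {..<min k (card ?A)}" unfolding ranks by auto
  finally have "card (rank P X ` {x \<in> ?A. rank P X x < k}) = min k (card ?A)" by simp
  moreover have "choice P k X = {x \<in> ?A. rank P X x < k}" using choice_eq_rank by auto
  ultimately show ?thesis using card_image[OF inj] by simp
qed

lemma chosen_preferred:
  assumes "x \<in> X" "acceptable P x" "x \<notin> choice P k X" "y \<in> choice P k X"
  shows "P (Some y) (Some x)"
proof -
  have y: "y \<in> X" "acceptable P y" "rank P X y < k" and x: "k \<le> rank P X x"
    using assms unfolding choice_eq_rank by auto
  then have "x \<noteq> y" by auto
  moreover have "\<not> P (Some x) (Some y)" using rank_strict_mono[of x y] assms x y XU by fastforce
  ultimately show ?thesis using acceptable_total[of x y] assms y XU by blast
qed

end

lemma choice_mem_subset: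
  assumes "X \<subseteq> U" "finite X" "Y \<subseteq> X" "x \<in> Y" "x \<in> choice P k X"
  shows "x \<in> choice P k Y"
proof -
  have "finite Y" "Y \<subseteq> U" using assms(1-3) finite_subset by auto
  moreover have "rank P Y x \<le> rank P X x"
    unfolding rank_def using assms(2,3) by (intro card_mono) auto
  ultimately show ?thesis using assms choice_eq_rank by fastforce
qed

lemma rank_ge_if_not_chosen:
  assumes "X \<subseteq> U" "finite X" "x \<in> X" "acceptable P x" "x \<notin> choice P k X"
    and "choice P k X \<subseteq> Y" "finite Y"
  shows "k \<le> rank P Y x"
proof -
  have "k \<le> rank P X x" using assms(1-5) choice_eq_rank by auto
  then have "card (choice P k X) = k"
    using card_choice[OF assms(1,2)] rank_less_card[OF assms(1-4)] by simp
  moreover have "choice P k X \<subseteq> {y \<in> Y. acceptable P y \<and> P (Some y) (Some x)}"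
    using assms(6) chosen_preferred[OF assms(1-5)] acceptable_if_chosen[of _ P k X] by blast
  then have "card (choice P k X) \<le> rank P Y x"
    unfolding rank_def using assms(7) by (intro card_mono) auto
  ultimately show ?thesis by simp
qed

lemma choice_eq_if_subset:
  assumes "X \<subseteq> U" "finite X" "choice P k X \<subseteq> Y" "Y \<subseteq> X"
  shows "choice P k Y = choice P k X"
proof
  show "choice P k X \<subseteq> choice P k Y" using choice_mem_subset[OF assms(1,2,4)] assms(3) by blast
  show "choice P k Y \<subseteq> choice P k X"
  proof
    fix x assume x: "x \<in> choice P k Y"
    have Y: "Y \<subseteq> U" "finite Y" using assms(1,2,4) finite_subset[OF assms(4,2)] by auto
    have "x \<in> X" using choice_subset[of P k Y] x assms(4) by blast
    show "x \<in> choice P k X"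
    proof (rule ccontr)
      assume "x \<notin> choice P k X"
      then have "k \<le> rank P Y x"
        using rank_ge_if_not_chosen[OF assms(1,2) \<open>x \<in> X\<close> acceptable_if_chosen[OF x] _ assms(3) Y(2)]
        by blast
      then show False using x choice_eq_rank[OF Y] by auto
    qed
  qed
qed

lemma not_chosen_insert_mono:
  assumes "insert x X \<subseteq> U" "finite X" "x \<notin> choice P k (insert x X)"
    and "choice P k X \<subseteq> Y" "insert x Y \<subseteq> U" "finite Y"
  shows "x \<notin> choice P k (insert x Y)"
proof
  assume chosen: "x \<in> choice P k (insert x Y)"
  have "choice P k (insert x X) \<subseteq> X" using assms(3) choice_subset[of P k "insert x X"] by blast
  then have "choice P k (insert x X) = choice P k X"
    using choice_eq_if_subset[of "insert x X"] assms(1,2) by auto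
  then have "k \<le> rank P (insert x Y) x"
    using rank_ge_if_not_chosen[of "insert x X" x k "insert x Y"] assms acceptable_if_chosen[OF chosen]
    by auto
  then show False using chosen choice_eq_rank[of "insert x Y"] assms(5,6) by auto
qed

lemma choice_insert_if_beats:
  assumes "Y \<subseteq> U" "finite Y" "card Y \<le> k" "x \<in> U" "acceptable P x"
    and "y \<in> Y" "acceptable P y" "P (Some x) (Some y)"
  shows "x \<in> choice P k (insert x Y)"
proof -
  have "{z \<in> insert x Y. acceptable P z \<and> P (Some z) (Some x)} \<subseteq> Y - {y}"
    using acceptable_irrefl acceptable_asym assms by blast
  then have "rank P (insert x Y) x \<le> card (Y - {y})"
    unfolding rank_def using assms(2) by (simp add: card_mono)
  also have "\<dots> < k" using assms(2,3,6) card_Diff1_less[of Y y] by simp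
  finally show ?thesis using choice_eq_rank[of "insert x Y"] assms by simp
qed

lemma better_outside_if_not_chosen:
  assumes "X \<subseteq> U" "finite X" "x \<in> X" "acceptable P x" "x \<notin> choice P k X"
    and "finite Y" "card Y \<le> k" "x \<in> Y"
  obtains y where "y \<in> X" "acceptable P y" "P (Some y) (Some x)" "y \<notin> Y"
proof -
  let ?B = "{y \<in> X. acceptable P y \<and> P (Some y) (Some x)}"
  have "k \<le> card ?B" using assms(1-5) choice_eq_rank unfolding rank_def by auto
  moreover have "card (Y - {x}) < k" using assms(6-8) card_Diff1_less[of Y x] by simp
  ultimately have "\<not> ?B \<subseteq> Y - {x}" using assms(6) card_mono[of "Y - {x}" ?B] by auto
  moreover have "x \<notin> ?B" using acceptable_irrefl assms(1,3,4) by blast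
  ultimately show ?thesis using that by blast
qed

end

context
  fixes D :: "'d set" and H :: "'h set" and N :: "('d \<times> 'h) set"
    and Pd :: "'d \<Rightarrow> 'h option \<Rightarrow> 'h option \<Rightarrow> bool"
    and Ph :: "'h \<Rightarrow> 'd option \<Rightarrow> 'd option \<Rightarrow> bool"
    and \<iota> :: "'h \<Rightarrow> nat" and \<kappa> :: "'d \<Rightarrow> nat"
  assumes ps: "pairwise_stable D H Pd Ph \<iota> \<kappa> N"
begin

lemma pairwise_stable_subset: "N \<subseteq> D \<times> H"
  using ps unfolding pairwise_stable_def interview_matching_def by simp

lemma pairwise_stable_dset_subset: "dset N d \<subseteq> H"
  using pairwise_stable_subset unfolding dset_def by blast

lemma pairwise_stable_hset_subset: "hset N h \<subseteq> D"
  using pairwise_stable_subset unfolding hset_def by blast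

lemma pairwise_stable_card_dset: "d \<in> D \<Longrightarrow> card (dset N d) \<le> \<kappa> d"
  using ps unfolding pairwise_stable_def interview_matching_def by simp

lemma pairwise_stable_card_hset: "h \<in> H \<Longrightarrow> card (hset N h) \<le> \<iota> h"
  using ps unfolding pairwise_stable_def interview_matching_def by simp

lemma pairwise_stable_no_block:
  "d \<in> D \<Longrightarrow> h \<in> H \<Longrightarrow> (d, h) \<notin> N \<Longrightarrow>
   \<not> (h \<in> choice (Pd d) (\<kappa> d) (insert h (dset N d)) \<and> d \<in> choice (Ph h) (\<iota> h) (insert d (hset N h)))"
  using ps unfolding pairwise_stable_def by simp

lemma pairwise_stable_memD:
  assumes "(d, h) \<in> N"
  shows "d \<in> D" "h \<in> H" "acceptable (Pd d) h" "acceptable (Ph h) d"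
proof -
  show d: "d \<in> D" and h: "h \<in> H" using pairwise_stable_subset assms by auto
  have "h \<in> choice (Pd d) (\<kappa> d) (dset N d)" "d \<in> choice (Ph h) (\<iota> h) (hset N h)"
    using ps d h assms unfolding pairwise_stable_def dset_def hset_def by auto
  then show "acceptable (Pd d) h" "acceptable (Ph h) d" by (auto dest: acceptable_if_chosen)
qed

end

section \<open>Hospital-proposing deferred acceptance\<close>

definition hospital_optimal_below ::
  "'d set \<Rightarrow> 'h set \<Rightarrow> ('d \<Rightarrow> 'h option \<Rightarrow> 'h option \<Rightarrow> bool)
     \<Rightarrow> ('h \<Rightarrow> 'd option \<Rightarrow> 'd option \<Rightarrow> bool) \<Rightarrow> ('h \<Rightarrow> nat) \<Rightarrow> ('d \<Rightarrow> nat)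
     \<Rightarrow> ('d \<times> 'h) set \<Rightarrow> bool" where
  "hospital_optimal_below D H Pd Ph \<iota> \<kappa> \<nu> \<longleftrightarrow>
     (\<forall>\<kappa>0 N. (\<forall>d\<in>D. \<kappa>0 d \<le> \<kappa> d) \<longrightarrow> pairwise_stable D H Pd Ph \<iota> \<kappa>0 N \<longrightarrow>
        (\<forall>h\<in>H. choice (Ph h) (\<iota> h) (hset \<nu> h \<union> hset N h) = hset \<nu> h))"

lemma hospital_optimal_belowD:
  "hospital_optimal_below D H Pd Ph \<iota> \<kappa> \<nu> \<Longrightarrow> \<forall>d\<in>D. \<kappa>0 d \<le> \<kappa> d \<Longrightarrow>
   pairwise_stable D H Pd Ph \<iota> \<kappa>0 N \<Longrightarrow> h \<in> H \<Longrightarrow>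
   choice (Ph h) (\<iota> h) (hset \<nu> h \<union> hset N h) = hset \<nu> h"
  unfolding hospital_optimal_below_def by blast

locale deferred_acceptance =
  fixes D :: "'d set" and H :: "'h set"
    and Pd :: "'d \<Rightarrow> 'h option \<Rightarrow> 'h option \<Rightarrow> bool"
    and Ph :: "'h \<Rightarrow> 'd option \<Rightarrow> 'd option \<Rightarrow> bool"
    and \<iota> :: "'h \<Rightarrow> nat" and \<kappa> :: "'d \<Rightarrow> nat"
  assumes finite_D: "finite D" and finite_H: "finite H"
    and doctor_linear: "d \<in> D \<Longrightarrow> acceptable_linear H (Pd d)"
    and hospital_linear: "h \<in> H \<Longrightarrow> acceptable_linear D (Ph h)"
begin

text \<open>A state of the algorithm is the set \<open>R\<close> of proposals rejected so far: every hospital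
  proposes to its choice among the doctors that have not rejected it, and every doctor
  rejects all offers outside her choice.\<close>

definition offers :: "('d \<times> 'h) set \<Rightarrow> ('d \<times> 'h) set" where
  "offers R = {(d, h). d \<in> D \<and> h \<in> H \<and> d \<in> choice (Ph h) (\<iota> h) (D - hset R h)}"

definition held :: "('d \<times> 'h) set \<Rightarrow> ('d \<times> 'h) set" where
  "held R = {(d, h) \<in> offers R. h \<in> choice (Pd d) (\<kappa> d) (dset (offers R) d)}"

definition reject_step :: "('d \<times> 'h) set \<Rightarrow> ('d \<times> 'h) set" where
  "reject_step R = R \<union> (offers R - held R)"

definition da_invariant :: "('d \<times> 'h) set \<Rightarrow> bool" where
  "da_invariant R \<longleftrightarrow> R \<subseteq> D \<times> H \<and>
     (\<forall>(d, h) \<in> R. h \<notin> choice (Pd d) (\<kappa> d) (insert h (dset (offers R) d))) \<and>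
     (\<forall>\<kappa>0 N. (\<forall>d\<in>D. \<kappa>0 d \<le> \<kappa> d) \<longrightarrow> pairwise_stable D H Pd Ph \<iota> \<kappa>0 N \<longrightarrow> R \<inter> N = {})"

lemma offers_subset: "offers R \<subseteq> D \<times> H"
  unfolding offers_def by auto

lemma offers_not_rejected: "(d, h) \<in> offers R \<Longrightarrow> (d, h) \<notin> R"
  unfolding offers_def hset_def using choice_subset by fastforce

lemma hset_offers: "h \<in> H \<Longrightarrow> hset (offers R) h = choice (Ph h) (\<iota> h) (D - hset R h)"
  unfolding offers_def hset_def using choice_subset by fastforce

lemma dset_offers_subset: "dset (offers R) d \<subseteq> H"
  unfolding offers_def dset_def by auto

lemma finite_dset_offers: "finite (dset (offers R) d)"
  using finite_subset[OF dset_offers_subset finite_H] .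

lemma finite_D_minus: "D - A \<subseteq> D" "finite (D - A)"
  using finite_D by auto

lemma held_offered_again: "held R \<subseteq> offers (reject_step R)"
proof
  fix p assume p: "p \<in> held R"
  then obtain d h where p_eq: "p = (d, h)" and o: "(d, h) \<in> offers R" unfolding held_def by blast
  then have dh: "d \<in> D" "h \<in> H" "d \<in> choice (Ph h) (\<iota> h) (D - hset R h)"
    unfolding offers_def by auto
  have "(d, h) \<notin> reject_step R"
    using p p_eq offers_not_rejected[OF o] unfolding reject_step_def by simp
  then have "d \<in> D - hset (reject_step R) h" using dh unfolding hset_def by simp
  moreover have "D - hset (reject_step R) h \<subseteq> D - hset R h"
    unfolding reject_step_def hset_def by auto
  ultimately have "d \<in> choice (Ph h) (\<iota> h) (D - hset (reject_step R) h)"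
    using choice_mem_subset[OF hospital_linear[OF dh(2)] finite_D_minus] dh(3) by blast
  then show "p \<in> offers (reject_step R)" using p_eq dh unfolding offers_def by simp
qed

lemma da_invariant_empty: "da_invariant {}"
  unfolding da_invariant_def by simp

lemma reject_step_justified:
  assumes inv: "da_invariant R" and dh: "(d, h) \<in> reject_step R"
  shows "h \<notin> choice (Pd d) (\<kappa> d) (insert h (dset (offers (reject_step R)) d))"
proof -
  have "reject_step R \<subseteq> D \<times> H"
    using inv offers_subset unfolding da_invariant_def reject_step_def by blast
  then have d: "d \<in> D" and h: "h \<in> H" using dh by auto
  let ?X = "dset (offers R) d" and ?Y = "dset (offers (reject_step R)) d"
  have held: "choice (Pd d) (\<kappa> d) ?X \<subseteq> ?Y"
    using held_offered_again[of R] choice_subset[of "Pd d" "\<kappa> d" ?X]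
    unfolding held_def dset_def by blast
  have rejected: "h \<notin> choice (Pd d) (\<kappa> d) (insert h ?X)"
  proof (cases "(d, h) \<in> R")
    case True
    then show ?thesis using inv unfolding da_invariant_def by blast
  next
    case False
    then have "h \<in> ?X" "h \<notin> choice (Pd d) (\<kappa> d) ?X"
      using dh unfolding reject_step_def held_def dset_def by auto
    then show ?thesis by (simp add: insert_absorb)
  qed
  have "insert h ?X \<subseteq> H" "insert h ?Y \<subseteq> H" using h dset_offers_subset by auto
  from not_chosen_insert_mono[OF doctor_linear[OF d] this(1) finite_dset_offers rejected held this(2)
      finite_dset_offers]
  show ?thesis .
qed

text \<open>A doctor in \<open>N\<close> with a pair rejected in this round misses one of the better offers
  she holds, and that offer blocks \<open>N\<close>.\<close>

lemma reject_step_not_pairwise_stable: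
  assumes inv: "da_invariant R" and cap: "\<forall>d\<in>D. \<kappa>0 d \<le> \<kappa> d"
    and ps: "pairwise_stable D H Pd Ph \<iota> \<kappa>0 N"
  shows "reject_step R \<inter> N = {}"
proof (rule ccontr)
  assume "reject_step R \<inter> N \<noteq> {}"
  then obtain d h where dh: "(d, h) \<in> reject_step R" and dhN: "(d, h) \<in> N" by auto
  have RN: "R \<inter> N = {}" using inv cap ps unfolding da_invariant_def by blast
  then have "(d, h) \<in> offers R" "(d, h) \<notin> held R"
    using dh dhN unfolding reject_step_def by auto
  then have hX: "h \<in> dset (offers R) d" and h_rejected: "h \<notin> choice (Pd d) (\<kappa> d) (dset (offers R) d)"
    and d: "d \<in> D" and h: "h \<in> H"
    using offers_subset unfolding held_def dset_def by auto
  have lin: "acceptable_linear H (Pd d)" by (rule doctor_linear[OF d])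
  have h_acc: "acceptable (Pd d) h" using pairwise_stable_memD[OF ps dhN] by blast
  have fin_N: "finite (dset N d)"
    using finite_subset[OF pairwise_stable_dset_subset[OF ps] finite_H] .
  have card_N: "card (dset N d) \<le> \<kappa> d"
    using pairwise_stable_card_dset[OF ps d] cap d by fastforce
  obtain h' where h': "h' \<in> dset (offers R) d" "acceptable (Pd d) h'" "Pd d (Some h') (Some h)"
    "h' \<notin> dset N d"
    using better_outside_if_not_chosen[OF lin dset_offers_subset finite_dset_offers hX h_acc
        h_rejected fin_N card_N] dhN unfolding dset_def by auto
  then have offer': "(d, h') \<in> offers R" and h'H: "h' \<in> H" and not_N: "(d, h') \<notin> N"
    using offers_subset unfolding dset_def by auto
  have "h' \<in> choice (Pd d) (\<kappa>0 d) (insert h' (dset N d))"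
    using choice_insert_if_beats[OF lin pairwise_stable_dset_subset[OF ps] fin_N
        pairwise_stable_card_dset[OF ps d] h'H h'(2) _ h_acc h'(3)] dhN
    unfolding dset_def by simp
  moreover have "d \<in> choice (Ph h') (\<iota> h') (insert d (hset N h'))"
  proof -
    have "insert d (hset N h') \<subseteq> D - hset R h'"
      using offers_not_rejected[OF offer'] d RN pairwise_stable_hset_subset[OF ps]
      unfolding hset_def by blast
    moreover have "d \<in> choice (Ph h') (\<iota> h') (D - hset R h')"
      using offer' unfolding offers_def by simp
    ultimately show ?thesis
      using choice_mem_subset[OF hospital_linear[OF h'H] finite_D_minus] by blast
  qed
  ultimately show False using pairwise_stable_no_block[OF ps d h'H not_N] by blast
qed

lemma da_invariant_step:
  assumes "da_invariant R"
  shows "da_invariant (reject_step R)"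
proof -
  have "reject_step R \<subseteq> D \<times> H"
    using assms offers_subset[of R] unfolding da_invariant_def reject_step_def by blast
  then show ?thesis
    using reject_step_justified[OF assms] reject_step_not_pairwise_stable[OF assms]
    unfolding da_invariant_def by blast
qed

lemma da_fixpoint_exists: "\<exists>R. da_invariant R \<and> reject_step R = R"
proof -
  have "\<exists>R'. da_invariant R' \<and> reject_step R' = R'" if "da_invariant R" for R
    using that
  proof (induction "card (D \<times> H - R)" arbitrary: R rule: less_induct)
    case less
    show ?case
    proof (cases "reject_step R = R")
      case False
      have "reject_step R \<subseteq> D \<times> H"
        using da_invariant_step[OF less.prems] unfolding da_invariant_def by blast
      then have "D \<times> H - reject_step R \<subset> D \<times> H - R"
        using False unfolding reject_step_def by blast
      then have "card (D \<times> H - reject_step R) < card (D \<times> H - R)"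
        using finite_D finite_H by (intro psubset_card_mono) auto
      then show ?thesis using less.hyps da_invariant_step[OF less.prems] by blast
    qed (use less.prems in blast)
  qed
  then show ?thesis using da_invariant_empty by blast
qed

context
  fixes R assumes inv: "da_invariant R" and fixpoint: "reject_step R = R"
begin

lemma choice_offers_dset: "choice (Pd d) (\<kappa> d) (dset (offers R) d) = dset (offers R) d"
proof -
  have "offers R \<subseteq> held R" using fixpoint offers_not_rejected unfolding reject_step_def by fast
  then show ?thesis
    using choice_subset[of "Pd d" "\<kappa> d" "dset (offers R) d"] unfolding held_def dset_def by blast
qed

lemma choice_offers_hset:
  assumes "h \<in> H" "hset (offers R) h \<subseteq> X" "X \<subseteq> D - hset R h"
  shows "choice (Ph h) (\<iota> h) X = hset (offers R) h"
  using choice_eq_if_subset[OF hospital_linear finite_D_minus] assms hset_offers by simp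

lemma hset_offers_subset: "h \<in> H \<Longrightarrow> hset (offers R) h \<subseteq> D - hset R h"
  using hset_offers choice_subset[of "Ph h" "\<iota> h" "D - hset R h"] by simp

lemma pairwise_stable_offers: "pairwise_stable D H Pd Ph \<iota> \<kappa> (offers R)"
  unfolding pairwise_stable_def interview_matching_def
proof (intro conjI ballI allI impI)
  show "offers R \<subseteq> D \<times> H" by (rule offers_subset)
next
  fix d assume "d \<in> D"
  then show "card (dset (offers R) d) \<le> \<kappa> d"
    using card_choice[OF doctor_linear[OF \<open>d \<in> D\<close>] dset_offers_subset[of R d]
        finite_dset_offers[of R d], of "\<kappa> d"] choice_offers_dset[of d] by simp
next
  fix h assume "h \<in> H"
  then show "card (hset (offers R) h) \<le> \<iota> h"
    using card_choice[OF hospital_linear[OF \<open>h \<in> H\<close>] finite_D_minus, of "\<iota> h"] hset_offers[of h R]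
    by simp
next
  fix d show "choice (Pd d) (\<kappa> d) (dset (offers R) d) = dset (offers R) d" by (rule choice_offers_dset)
next
  fix h assume "h \<in> H"
  then show "choice (Ph h) (\<iota> h) (hset (offers R) h) = hset (offers R) h"
    using choice_offers_hset hset_offers_subset by blast
next
  fix d h assume d: "d \<in> D" and h: "h \<in> H" and not_offered: "(d, h) \<notin> offers R"
  show "\<not> (h \<in> choice (Pd d) (\<kappa> d) (insert h (dset (offers R) d)) \<and>
           d \<in> choice (Ph h) (\<iota> h) (insert d (hset (offers R) h)))"
  proof (cases "(d, h) \<in> R")
    case True
    then show ?thesis using inv unfolding da_invariant_def by blast
  next
    case False
    then have "insert d (hset (offers R) h) \<subseteq> D - hset R h"
      using hset_offers_subset[OF h] d unfolding hset_def by blast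
    then have "choice (Ph h) (\<iota> h) (insert d (hset (offers R) h)) = hset (offers R) h"
      using choice_offers_hset[OF h] by blast
    then show ?thesis using not_offered unfolding hset_def by simp
  qed
qed

lemma hospital_optimal_below_offers: "hospital_optimal_below D H Pd Ph \<iota> \<kappa> (offers R)"
  unfolding hospital_optimal_below_def
proof (intro allI impI ballI)
  fix \<kappa>0 N h
  assume cap: "\<forall>d\<in>D. \<kappa>0 d \<le> \<kappa> d" and ps: "pairwise_stable D H Pd Ph \<iota> \<kappa>0 N" and h: "h \<in> H"
  have "R \<inter> N = {}" using inv cap ps unfolding da_invariant_def by blast
  then have "hset (offers R) h \<union> hset N h \<subseteq> D - hset R h"
    using hset_offers_subset[OF h] pairwise_stable_hset_subset[OF ps] unfolding hset_def by blast
  then show "choice (Ph h) (\<iota> h) (hset (offers R) h \<union> hset N h) = hset (offers R) h"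
    using choice_offers_hset[OF h] by blast
qed

end

theorem deferred_acceptance_exists:
  "\<exists>\<nu>. pairwise_stable D H Pd Ph \<iota> \<kappa> \<nu> \<and> hospital_optimal_below D H Pd Ph \<iota> \<kappa> \<nu>"
  using da_fixpoint_exists pairwise_stable_offers hospital_optimal_below_offers by blast

end

section \<open>One-to-one matchings\<close>

lemma matching_subset: "matching D H M \<Longrightarrow> M \<subseteq> D \<times> H"
  unfolding matching_def by blast

lemma matching_functional: "matching D H M \<Longrightarrow> (d, h) \<in> M \<Longrightarrow> (d, h') \<in> M \<Longrightarrow> h = h'"
  unfolding matching_def by blast

lemma matching_injective: "matching D H M \<Longrightarrow> (d, h) \<in> M \<Longrightarrow> (d', h) \<in> M \<Longrightarrow> d = d'"
  unfolding matching_def by blast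

lemma pd_eq_Some_iff:
  assumes "matching D H M"
  shows "pd M d = Some h \<longleftrightarrow> (d, h) \<in> M"
proof -
  have "(THE h. (d, h) \<in> M) = h" if "(d, h) \<in> M" for h
    using that assms unfolding matching_def by (intro the_equality) blast+
  then show ?thesis unfolding pd_def by auto
qed

lemma ph_eq_Some_iff:
  assumes "matching D H M"
  shows "ph M h = Some d \<longleftrightarrow> (d, h) \<in> M"
proof -
  have "(THE d. (d, h) \<in> M) = d" if "(d, h) \<in> M" for d
    using that assms unfolding matching_def by (intro the_equality) blast+
  then show ?thesis unfolding ph_def by auto
qed

lemma pd_eq_None_iff: "pd M d = None \<longleftrightarrow> (\<forall>h. (d, h) \<notin> M)"
  unfolding pd_def by auto

lemma ph_eq_None_iff: "ph M h = None \<longleftrightarrow> (\<forall>d. (d, h) \<notin> M)"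
  unfolding ph_def by auto

lemma dset_eq_set_option_pd: "matching D H M \<Longrightarrow> dset M d = set_option (pd M d)"
  unfolding dset_def by (cases "pd M d") (auto simp: pd_eq_Some_iff pd_eq_None_iff)

lemma hset_eq_set_option_ph: "matching D H M \<Longrightarrow> hset M h = set_option (ph M h)"
  unfolding hset_def by (cases "ph M h") (auto simp: ph_eq_Some_iff ph_eq_None_iff)

lemma pd_range: "matching D H M \<Longrightarrow> pd M d \<in> Some ` H \<union> {None}"
  using pd_eq_Some_iff[of D H M d] unfolding matching_def by (cases "pd M d") auto

lemma pd_cong: "(\<And>h. (d, h) \<in> M \<longleftrightarrow> (d, h) \<in> M') \<Longrightarrow> pd M d = pd M' d"
  unfolding pd_def by simp

lemma ph_cong: "(\<And>d. (d, h) \<in> M \<longleftrightarrow> (d, h) \<in> M') \<Longrightarrow> ph M h = ph M' h"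
  unfolding ph_def by simp

lemma dset_converse: "dset (converse M) = hset M"
  unfolding dset_def hset_def by auto

lemma hset_converse: "hset (converse M) = dset M"
  unfolding dset_def hset_def by auto

text \<open>Weaker than linearity on all options, so that it also covers the restricted
  preferences of the second step.\<close>

definition acceptable_order :: "'a set \<Rightarrow> ('a option \<Rightarrow> 'a option \<Rightarrow> bool) \<Rightarrow> bool" where
  "acceptable_order U P \<longleftrightarrow> strict_linear_on (insert None (Some ` {x \<in> U. acceptable P x})) P \<and>
     (\<forall>x\<in>U. \<forall>y\<in>U. P (Some x) (Some y) \<longrightarrow> acceptable P y \<longrightarrow> acceptable P x)"

abbreviation acceptable_outcomes :: "'a set \<Rightarrow> ('a option \<Rightarrow> 'a option \<Rightarrow> bool) \<Rightarrow> 'a option set" where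
  "acceptable_outcomes U P \<equiv> insert None (Some ` {x \<in> U. acceptable P x})"

context
  fixes U :: "'a set" and P :: "'a option \<Rightarrow> 'a option \<Rightarrow> bool"
  assumes ord: "acceptable_order U P"
begin

lemma acceptable_order_linear: "acceptable_linear U P"
  using ord unfolding acceptable_order_def acceptable_linear_def strict_linear_on_def by blast

lemma acceptable_order_asym:
  "x \<in> acceptable_outcomes U P \<Longrightarrow> y \<in> acceptable_outcomes U P \<Longrightarrow> P x y \<Longrightarrow> \<not> P y x"
  using ord unfolding acceptable_order_def strict_linear_on_def by blast

lemma acceptable_order_total:
  "x \<in> acceptable_outcomes U P \<Longrightarrow> y \<in> acceptable_outcomes U P \<Longrightarrow> x \<noteq> y \<Longrightarrow> P x y \<or> P y x"
  using ord unfolding acceptable_order_def strict_linear_on_def by blast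

lemma choice_one_set_option:
  assumes "w \<in> acceptable_outcomes U P"
  shows "choice P 1 (set_option w) = set_option w"
  using assms choice_le_capacity[of "set_option w" 1 P] by (cases w) auto

lemma choice_one_insert_iff:
  assumes x: "x \<in> U" and w: "w \<in> acceptable_outcomes U P" "w \<noteq> Some x"
  shows "x \<in> choice P 1 (insert x (set_option w)) \<longleftrightarrow> P (Some x) w"
proof (cases w)
  case None
  have "x \<in> choice P 1 {x} \<longleftrightarrow> acceptable P x" using choice_le_capacity[of "{x}" 1 P] by auto
  then show ?thesis using None unfolding acceptable_def by simp
next
  case (Some y)
  have y: "y \<in> U" "acceptable P y" "y \<noteq> x" using w Some by auto
  have lin: "acceptable_linear U P" by (rule acceptable_order_linear)
  have "x \<in> choice P 1 {x, y} \<longleftrightarrow> acceptable P x \<and> rank P {x, y} x = 0"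
    using choice_eq_rank[OF lin, of "{x, y}"] x y by auto
  also have "\<dots> \<longleftrightarrow> acceptable P x \<and> \<not> P (Some y) (Some x)"
    unfolding rank_def using acceptable_irrefl[OF lin x] y by auto
  also have "\<dots> \<longleftrightarrow> P (Some x) (Some y)"
    using acceptable_total[OF lin x y(1) _ y(2)] acceptable_asym[OF lin x y(1) _ y(2)] x y ord
    unfolding acceptable_order_def by blast
  finally show ?thesis using Some by simp
qed

lemma choice_one_prefers:
  assumes w: "w \<in> acceptable_outcomes U P" and w': "w' \<in> acceptable_outcomes U P"
    and chosen: "choice P 1 (set_option w \<union> set_option w') = set_option w"
  shows "w = w' \<or> P w w'"
proof (cases w')
  case None
  then show ?thesis using w unfolding acceptable_def by auto
next
  case (Some y)
  show ?thesis
  proof (rule ccontr)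
    assume *: "\<not> (w = w' \<or> P w w')"
    then have "P (Some y) w" using acceptable_order_total[OF w w'] Some by auto
    moreover have "y \<in> U" using w' Some by auto
    ultimately have "y \<in> choice P 1 (insert y (set_option w))"
      using choice_one_insert_iff[OF _ w] * Some by auto
    then show False using chosen * Some by auto
  qed
qed

end

locale marriage_market =
  fixes D :: "'d set" and H :: "'h set"
    and A :: "'d \<Rightarrow> 'h option \<Rightarrow> 'h option \<Rightarrow> bool"
    and B :: "'h \<Rightarrow> 'd option \<Rightarrow> 'd option \<Rightarrow> bool"
  assumes finite_D: "finite D" and finite_H: "finite H"
    and doctor_order: "d \<in> D \<Longrightarrow> acceptable_order H (A d)"
    and hospital_order: "h \<in> H \<Longrightarrow> acceptable_order D (B h)"
begin

lemma pd_acceptable: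
  assumes "matching D H M" "indiv_rational A B M"
  shows "pd M d \<in> acceptable_outcomes H (A d)"
  using assms pd_eq_Some_iff[OF assms(1)]
  unfolding matching_def indiv_rational_def acceptable_def by (cases "pd M d") auto

lemma ph_acceptable:
  assumes "matching D H M" "indiv_rational A B M"
  shows "ph M h \<in> acceptable_outcomes D (B h)"
  using assms ph_eq_Some_iff[OF assms(1)]
  unfolding matching_def indiv_rational_def acceptable_def by (cases "ph M h") auto

lemma blocks_iff_choice_one:
  assumes M: "matching D H M" "indiv_rational A B M" and dh: "d \<in> D" "h \<in> H" "(d, h) \<notin> M"
  shows "blocks A B M d h \<longleftrightarrow>
    h \<in> choice (A d) 1 (insert h (dset M d)) \<and> d \<in> choice (B h) 1 (insert d (hset M h))"
proof -
  have "pd M d \<noteq> Some h" "ph M h \<noteq> Some d"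
    using dh(3) pd_eq_Some_iff[OF M(1)] ph_eq_Some_iff[OF M(1)] by auto
  then show ?thesis
    unfolding blocks_def dset_eq_set_option_pd[OF M(1)] hset_eq_set_option_ph[OF M(1)]
    using choice_one_insert_iff[OF doctor_order[OF dh(1)] dh(2) pd_acceptable[OF M]]
      choice_one_insert_iff[OF hospital_order[OF dh(2)] dh(1) ph_acceptable[OF M]]
    by blast
qed

text \<open>By the next two lemmas, hospital-proposing deferred acceptance with unit capacities and
  the two sides exchanged yields the doctor-optimal stable matching.\<close>

lemma pairwise_stable_converse_if_stable:
  assumes ir: "indiv_rational A B M" and st: "stable D H A B M"
  shows "pairwise_stable H D B A (\<lambda>_. 1) (\<lambda>_. 1) (converse M)"
  unfolding pairwise_stable_def interview_matching_def dset_converse hset_converse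
proof (intro conjI ballI allI impI)
  have m: "matching D H M" using st unfolding stable_def by blast
  have card_set_option: "card (set_option w) \<le> 1" for w :: "'a option"
    by (cases w) auto
  show "converse M \<subseteq> H \<times> D" using matching_subset[OF m] by auto
  show "card (hset M h) \<le> 1" for h unfolding hset_eq_set_option_ph[OF m] by (rule card_set_option)
  show "card (dset M d) \<le> 1" for d unfolding dset_eq_set_option_pd[OF m] by (rule card_set_option)
  show "choice (B h) 1 (hset M h) = hset M h" if "h \<in> H" for h
    unfolding hset_eq_set_option_ph[OF m]
    by (rule choice_one_set_option[OF hospital_order[OF that] ph_acceptable[OF m ir]])
  show "choice (A d) 1 (dset M d) = dset M d" if "d \<in> D" for d
    unfolding dset_eq_set_option_pd[OF m]
    by (rule choice_one_set_option[OF doctor_order[OF that] pd_acceptable[OF m ir]])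
  show "\<not> (d \<in> choice (B h) 1 (insert d (hset M h)) \<and> h \<in> choice (A d) 1 (insert h (dset M d)))"
    if "h \<in> H" "d \<in> D" "(h, d) \<notin> converse M" for h d
    using that blocks_iff_choice_one[OF m ir] st unfolding stable_def by auto
qed

lemma stable_if_pairwise_stable_converse:
  assumes ps: "pairwise_stable H D B A (\<lambda>_. 1) (\<lambda>_. 1) (converse M)"
  shows "indiv_rational A B M" and "stable D H A B M"
proof -
  have sub: "M \<subseteq> D \<times> H" using pairwise_stable_subset[OF ps] by auto
  have "card (dset M d) \<le> 1" if "d \<in> D" for d
    using pairwise_stable_card_hset[OF ps that] unfolding hset_converse by simp
  moreover have "card (hset M h) \<le> 1" if "h \<in> H" for h
    using pairwise_stable_card_dset[OF ps that] unfolding dset_converse by simp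
  moreover have "finite (dset M d)" "finite (hset M h)" for d h
    using sub finite_subset[OF _ finite_H, of "dset M d"] finite_subset[OF _ finite_D, of "hset M h"]
    unfolding dset_def hset_def by auto
  ultimately have m: "matching D H M"
    using sub unfolding matching_def dset_def hset_def by (auto simp: card_le_Suc0_iff_eq)
  show ir: "indiv_rational A B M"
    unfolding indiv_rational_def using pairwise_stable_memD[OF ps] unfolding acceptable_def by auto
  have "\<not> blocks A B M d h" if dh: "d \<in> D" "h \<in> H" for d h
  proof
    assume bl: "blocks A B M d h"
    have "(d, h) \<notin> M"
    proof
      assume "(d, h) \<in> M"
      then have "pd M d = Some h" "acceptable (A d) h"
        using pd_eq_Some_iff[OF m] ir unfolding indiv_rational_def acceptable_def by auto
      then show False
        using bl acceptable_irrefl[OF acceptable_order_linear[OF doctor_order[OF dh(1)]] dh(2)]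
        unfolding blocks_def by simp
    qed
    then show False
      using bl blocks_iff_choice_one[OF m ir dh] pairwise_stable_no_block[OF ps dh(2,1)]
      unfolding dset_converse hset_converse by simp
  qed
  with m show "stable D H A B M" unfolding stable_def by blast
qed

theorem doctor_optimal_stable_exists: "\<exists>M. doctor_optimal_stable D H A B M"
proof -
  interpret deferred_acceptance H D B A "\<lambda>_. 1" "\<lambda>_. 1"
    using finite_D finite_H
    by unfold_locales (auto intro: acceptable_order_linear doctor_order hospital_order)
  obtain N where ps: "pairwise_stable H D B A (\<lambda>_. 1) (\<lambda>_. 1) N"
    and opt: "hospital_optimal_below H D B A (\<lambda>_. 1) (\<lambda>_. 1) N"
    using deferred_acceptance_exists by blast
  define M where "M = converse N"
  have M: "indiv_rational A B M" "stable D H A B M"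
    using stable_if_pairwise_stable_converse ps unfolding M_def by simp_all
  then have m: "matching D H M" unfolding stable_def by blast
  have "pd M d = pd M' d \<or> A d (pd M d) (pd M' d)"
    if M': "indiv_rational A B M'" "stable D H A B M'" and d: "d \<in> D" for M' d
  proof -
    have m': "matching D H M'" using M' unfolding stable_def by blast
    have "pairwise_stable H D B A (\<lambda>_. 1) (\<lambda>_. 1) (converse M')"
      by (rule pairwise_stable_converse_if_stable[OF M'])
    then have "choice (A d) 1 (hset N d \<union> hset (converse M') d) = hset N d"
      using hospital_optimal_belowD[OF opt, of "\<lambda>_. 1"] d by simp
    then have "choice (A d) 1 (dset M d \<union> dset M' d) = dset M d"
      unfolding M_def dset_converse hset_converse by simp
    then show ?thesis
      unfolding dset_eq_set_option_pd[OF m] dset_eq_set_option_pd[OF m']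
      by (rule choice_one_prefers[OF doctor_order[OF d] pd_acceptable[OF m M(1)]
            pd_acceptable[OF m' M'(1)]])
  qed
  with M show ?thesis unfolding doctor_optimal_stable_def by blast
qed

lemma doctor_optimal_stable_unique:
  assumes M: "doctor_optimal_stable D H A B M" and M': "doctor_optimal_stable D H A B M'"
  shows "M = M'"
proof -
  have ir: "indiv_rational A B M" "indiv_rational A B M'" and m: "matching D H M" "matching D H M'"
    using M M' unfolding doctor_optimal_stable_def stable_def by auto
  have pd_eq: "pd M d = pd M' d" if d: "d \<in> D" for d
    using M M' d acceptable_order_asym[OF doctor_order[OF d] pd_acceptable[OF m(1) ir(1)]
        pd_acceptable[OF m(2) ir(2)]]
    unfolding doctor_optimal_stable_def by metis
  have "(d, h) \<in> M \<longleftrightarrow> (d, h) \<in> M'" for d h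
  proof (cases "d \<in> D")
    case True
    then show ?thesis using pd_eq pd_eq_Some_iff[OF m(1)] pd_eq_Some_iff[OF m(2)] by metis
  next
    case False
    then show ?thesis using m unfolding matching_def by auto
  qed
  then show ?thesis by auto
qed

lemma the_doctor_optimal_stable:
  "doctor_optimal_stable D H A B (THE M. doctor_optimal_stable D H A B M)"
proof -
  obtain M where M: "doctor_optimal_stable D H A B M" using doctor_optimal_stable_exists by blast
  show ?thesis
    by (rule theI[where P = "doctor_optimal_stable D H A B", OF M
          doctor_optimal_stable_unique[OF _ M]])
qed

end

section \<open>The two steps of the interview procedure\<close>

lemma hospital_optimal_ps_unique:
  assumes "hospital_optimal_ps D H Pd Ph \<iota> \<kappa> N" "hospital_optimal_ps D H Pd Ph \<iota> \<kappa> N'"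
  shows "N = N'"
proof -
  have ps: "pairwise_stable D H Pd Ph \<iota> \<kappa> N" "pairwise_stable D H Pd Ph \<iota> \<kappa> N'"
    using assms unfolding hospital_optimal_ps_def by blast+
  have "hset N h = hset N' h" if "h \<in> H" for h
  proof -
    have "hset N h = choice (Ph h) (\<iota> h) (hset N h \<union> hset N' h)"
      using assms(1) ps(2) that unfolding hospital_optimal_ps_def by blast
    also have "\<dots> = hset N' h"
      using assms(2) ps(1) that unfolding hospital_optimal_ps_def by (simp add: Un_commute)
    finally show ?thesis .
  qed
  then show ?thesis
    using pairwise_stable_subset[OF ps(1)] pairwise_stable_subset[OF ps(2)]
    unfolding hset_def by auto
qed

lemma step1_spec:
  assumes "market D H Pd Ph"
  shows "pairwise_stable D H Pd Ph \<iota> \<kappa> (step1 D H Pd Ph \<iota> \<kappa>)"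
    and "hospital_optimal_below D H Pd Ph \<iota> \<kappa> (step1 D H Pd Ph \<iota> \<kappa>)"
proof -
  have "finite D" "finite H" using assms unfolding market_def by auto
  then interpret deferred_acceptance D H Pd Ph \<iota> \<kappa>
    by unfold_locales (auto intro: market_doctor_linear[OF assms] market_hospital_linear[OF assms])
  obtain \<nu> where ps: "pairwise_stable D H Pd Ph \<iota> \<kappa> \<nu>"
    and opt: "hospital_optimal_below D H Pd Ph \<iota> \<kappa> \<nu>"
    using deferred_acceptance_exists by blast
  have ho: "hospital_optimal_ps D H Pd Ph \<iota> \<kappa> \<nu>"
    using ps hospital_optimal_belowD[OF opt, of \<kappa>]
    unfolding hospital_optimal_ps_def by simp
  have "step1 D H Pd Ph \<iota> \<kappa> = \<nu>"
    unfolding step1_def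
    by (rule the_equality[where P = "hospital_optimal_ps D H Pd Ph \<iota> \<kappa>", OF ho
          hospital_optimal_ps_unique[OF _ ho]])
  with ps opt show "pairwise_stable D H Pd Ph \<iota> \<kappa> (step1 D H Pd Ph \<iota> \<kappa>)"
    and "hospital_optimal_below D H Pd Ph \<iota> \<kappa> (step1 D H Pd Ph \<iota> \<kappa>)" by simp_all
qed

definition restricted_outcomes :: "('a option \<Rightarrow> 'a option \<Rightarrow> bool) \<Rightarrow> 'a set \<Rightarrow> 'a option set" where
  "restricted_outcomes P S = insert None (Some ` {a \<in> S. acceptable P a})"

lemma restrict_pref_iff:
  "y \<in> restricted_outcomes P S \<Longrightarrow> restrict_pref P S x y \<longleftrightarrow> x \<in> restricted_outcomes P S \<and> P x y"
  unfolding restrict_pref_def restricted_outcomes_def acceptable_def Let_def by auto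

lemma acceptable_restrict_pref_iff: "acceptable (restrict_pref P S) a \<longleftrightarrow> a \<in> S \<and> acceptable P a"
  unfolding restrict_pref_def acceptable_def Let_def by auto

lemma Some_restricted_outcomes_iff: "Some a \<in> restricted_outcomes P S \<longleftrightarrow> a \<in> S \<and> acceptable P a"
  unfolding restricted_outcomes_def by auto

lemma acceptable_order_restrict_pref:
  assumes "strict_linear_on (Some ` U \<union> {None}) P"
  shows "acceptable_order U (restrict_pref P S)"
  unfolding acceptable_order_def
proof (intro conjI ballI impI)
  let ?A = "acceptable_outcomes U (restrict_pref P S)"
  have sub: "?A \<subseteq> Some ` U \<union> {None}" "?A \<subseteq> restricted_outcomes P S"
    unfolding restricted_outcomes_def acceptable_restrict_pref_iff by auto
  have "restrict_pref P S x y \<longleftrightarrow> P x y" if "x \<in> ?A" "y \<in> ?A" for x y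
    using restrict_pref_iff[of y P S x] that sub(2) by blast
  then show "strict_linear_on ?A (restrict_pref P S)"
    by (rule strict_linear_on_cong[OF strict_linear_on_subset[OF assms sub(1)]])
next
  fix x y assume "restrict_pref P S (Some x) (Some y)" "acceptable (restrict_pref P S) y"
  then show "acceptable (restrict_pref P S) x"
    using restrict_pref_iff[of "Some y" P S "Some x"]
    unfolding acceptable_restrict_pref_iff Some_restricted_outcomes_iff by blast
qed

abbreviation restricted_doctor_prefs ::
  "('d \<Rightarrow> 'h option \<Rightarrow> 'h option \<Rightarrow> bool) \<Rightarrow> ('d \<times> 'h) set \<Rightarrow> 'd \<Rightarrow> 'h option \<Rightarrow> 'h option \<Rightarrow> bool" where
  "restricted_doctor_prefs Pd N \<equiv> \<lambda>d. restrict_pref (Pd d) (dset N d)"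

abbreviation restricted_hospital_prefs ::
  "('h \<Rightarrow> 'd option \<Rightarrow> 'd option \<Rightarrow> bool) \<Rightarrow> ('d \<times> 'h) set \<Rightarrow> 'h \<Rightarrow> 'd option \<Rightarrow> 'd option \<Rightarrow> bool" where
  "restricted_hospital_prefs Ph N \<equiv> \<lambda>h. restrict_pref (Ph h) (hset N h)"

lemma marriage_market_restricted:
  assumes "market D H Pd Ph"
  shows "marriage_market D H (restricted_doctor_prefs Pd N) (restricted_hospital_prefs Ph N)"
proof unfold_locales
  show "finite D" "finite H" using assms unfolding market_def by auto
  show "acceptable_order H (restrict_pref (Pd d) (dset N d))" if "d \<in> D" for d
    using assms that unfolding market_def by (blast intro: acceptable_order_restrict_pref)
  show "acceptable_order D (restrict_pref (Ph h) (hset N h))" if "h \<in> H" for h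
    using assms that unfolding market_def by (blast intro: acceptable_order_restrict_pref)
qed

lemma ik_matching_doctor_optimal:
  assumes "market D H Pd Ph"
  shows "doctor_optimal_stable D H
    (restricted_doctor_prefs Pd (step1 D H Pd Ph \<iota> \<kappa>))
    (restricted_hospital_prefs Ph (step1 D H Pd Ph \<iota> \<kappa>))
    (ik_matching D H Pd Ph \<iota> \<kappa>)"
  unfolding ik_matching_def Let_def
  by (rule marriage_market.the_doctor_optimal_stable[OF marriage_market_restricted[OF assms]])

lemma indiv_rational_restricted_iff:
  "indiv_rational (restricted_doctor_prefs Pd N) (restricted_hospital_prefs Ph N) M \<longleftrightarrow>
   M \<subseteq> N \<and> indiv_rational Pd Ph M"
  unfolding indiv_rational_def acceptable_restrict_pref_iff[unfolded acceptable_def]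
  unfolding dset_def hset_def by auto

context
  fixes D :: "'d set" and H :: "'h set" and N M :: "('d \<times> 'h) set"
    and Pd :: "'d \<Rightarrow> 'h option \<Rightarrow> 'h option \<Rightarrow> bool"
    and Ph :: "'h \<Rightarrow> 'd option \<Rightarrow> 'd option \<Rightarrow> bool"
  assumes m: "matching D H M"
    and ir: "indiv_rational (restricted_doctor_prefs Pd N) (restricted_hospital_prefs Ph N) M"
begin

lemma pd_restricted_outcomes: "pd M d \<in> restricted_outcomes (Pd d) (dset N d)"
  using ir pd_eq_Some_iff[OF m] unfolding indiv_rational_restricted_iff indiv_rational_def
  by (cases "pd M d") (auto simp: restricted_outcomes_def acceptable_def dset_def)

lemma ph_restricted_outcomes: "ph M h \<in> restricted_outcomes (Ph h) (hset N h)"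
  using ir ph_eq_Some_iff[OF m] unfolding indiv_rational_restricted_iff indiv_rational_def
  by (cases "ph M h") (auto simp: restricted_outcomes_def acceptable_def hset_def)

lemma blocks_restricted_iff:
  "blocks (restricted_doctor_prefs Pd N) (restricted_hospital_prefs Ph N) M d h \<longleftrightarrow>
   (d, h) \<in> N \<and> acceptable (Pd d) h \<and> acceptable (Ph h) d \<and> blocks Pd Ph M d h"
  unfolding blocks_def restrict_pref_iff[OF pd_restricted_outcomes]
    restrict_pref_iff[OF ph_restricted_outcomes]
  by (auto simp: Some_restricted_outcomes_iff dset_def hset_def)

end

section \<open>Enlarging the doctors' interview capacities\<close>

locale interview_expansion =
  fixes D :: "'d set" and H :: "'h set"
    and Pd :: "'d \<Rightarrow> 'h option \<Rightarrow> 'h option \<Rightarrow> bool"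
    and Ph :: "'h \<Rightarrow> 'd option \<Rightarrow> 'd option \<Rightarrow> bool"
    and \<iota> :: "'h \<Rightarrow> nat" and \<kappa> \<kappa>' :: "'d \<Rightarrow> nat"
    and \<nu> \<nu>' \<mu> \<mu>' :: "('d \<times> 'h) set"
  assumes market: "market D H Pd Ph"
    and ps: "pairwise_stable D H Pd Ph \<iota> \<kappa> \<nu>"
    and ps': "pairwise_stable D H Pd Ph \<iota> \<kappa>' \<nu>'"
    and hospitals_keep_\<nu>': "h \<in> H \<Longrightarrow> choice (Ph h) (\<iota> h) (hset \<nu>' h \<union> hset \<nu> h) = hset \<nu>' h"
    and optimal:
      "doctor_optimal_stable D H (restricted_doctor_prefs Pd \<nu>) (restricted_hospital_prefs Ph \<nu>) \<mu>"
    and optimal':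
      "doctor_optimal_stable D H (restricted_doctor_prefs Pd \<nu>') (restricted_hospital_prefs Ph \<nu>') \<mu>'"
    and stable: "stable D H Pd Ph \<mu>"
begin

lemma finite_D: "finite D" and finite_H: "finite H"
  using market unfolding market_def by auto

lemma doctor_strict_linear: "d \<in> D \<Longrightarrow> strict_linear_on (Some ` H \<union> {None}) (Pd d)"
  using market unfolding market_def by blast

lemma hospital_strict_linear: "h \<in> H \<Longrightarrow> strict_linear_on (Some ` D \<union> {None}) (Ph h)"
  using market unfolding market_def by blast

lemma matching: "matching D H \<mu>" and matching': "matching D H \<mu>'"
  using stable optimal' unfolding doctor_optimal_stable_def stable_def by auto

lemma restricted_ir:
    "indiv_rational (restricted_doctor_prefs Pd \<nu>) (restricted_hospital_prefs Ph \<nu>) \<mu>"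
  and restricted_ir':
    "indiv_rational (restricted_doctor_prefs Pd \<nu>') (restricted_hospital_prefs Ph \<nu>') \<mu>'"
  using optimal optimal' unfolding doctor_optimal_stable_def by auto

lemma \<mu>_memD: "(d, h) \<in> \<mu> \<Longrightarrow> (d, h) \<in> \<nu> \<and> acceptable (Pd d) h \<and> acceptable (Ph h) d"
  and \<mu>'_memD: "(d, h) \<in> \<mu>' \<Longrightarrow> (d, h) \<in> \<nu>' \<and> acceptable (Pd d) h \<and> acceptable (Ph h) d"
  using restricted_ir restricted_ir'
  unfolding indiv_rational_restricted_iff indiv_rational_def acceptable_def by auto

lemma not_blocks_\<mu>: "d \<in> D \<Longrightarrow> h \<in> H \<Longrightarrow> \<not> blocks Pd Ph \<mu> d h"
  using stable unfolding stable_def by blast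

lemma not_blocks_\<mu>':
  "d \<in> D \<Longrightarrow> h \<in> H \<Longrightarrow> (d, h) \<in> \<nu>' \<Longrightarrow> acceptable (Pd d) h \<Longrightarrow> acceptable (Ph h) d \<Longrightarrow>
   \<not> blocks Pd Ph \<mu>' d h"
  using optimal' blocks_restricted_iff[OF matching' restricted_ir']
  unfolding doctor_optimal_stable_def stable_def by blast

lemma interview_kept:
  assumes dh: "(d, h) \<in> \<nu>" and d'h: "(d', h) \<in> \<nu>'" and pref: "Ph h (Some d) (Some d')"
  shows "(d, h) \<in> \<nu>'"
proof -
  have h: "h \<in> H" and d_acc: "acceptable (Ph h) d" using pairwise_stable_memD[OF ps dh] by auto
  have d': "d' \<in> D" "acceptable (Ph h) d'" using pairwise_stable_memD[OF ps' d'h] by auto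
  let ?S = "hset \<nu>' h \<union> hset \<nu> h"
  have lin: "acceptable_linear D (Ph h)" by (rule market_hospital_linear[OF market h])
  have S: "?S \<subseteq> D"
    using pairwise_stable_hset_subset[OF ps] pairwise_stable_hset_subset[OF ps'] by blast
  then have S: "?S \<subseteq> D" "finite ?S" using finite_subset[OF _ finite_D] by auto
  have "d' \<in> choice (Ph h) (\<iota> h) ?S" using hospitals_keep_\<nu>'[OF h] d'h unfolding hset_def by simp
  then have "rank (Ph h) ?S d' < \<iota> h" using choice_eq_rank[OF lin S] by simp
  moreover have "d \<in> ?S" using dh unfolding hset_def by simp
  moreover have "rank (Ph h) ?S d < rank (Ph h) ?S d'"
    using rank_strict_mono[OF lin S \<open>d \<in> ?S\<close> d_acc d' pref] .
  ultimately have "d \<in> choice (Ph h) (\<iota> h) ?S" using choice_eq_rank[OF lin S] d_acc by simp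
  then show ?thesis using hospitals_keep_\<nu>'[OF h] unfolding hset_def by simp
qed

definition improving :: "'d set" where
  "improving = {d \<in> D. Pd d (pd \<mu>' d) (pd \<mu> d)}"

lemma improving_subset: "improving \<subseteq> D"
  unfolding improving_def by blast

lemma weakly_prefers_if_not_improving:
  "d \<in> D \<Longrightarrow> d \<notin> improving \<Longrightarrow> pd \<mu> d = pd \<mu>' d \<or> Pd d (pd \<mu> d) (pd \<mu>' d)"
  using strict_linear_on_total[OF doctor_strict_linear pd_range[OF matching] pd_range[OF matching']]
  unfolding improving_def by blast

lemma not_prefers_unmatched:
  assumes d: "d \<in> D"
  shows "\<not> Pd d None (pd \<mu> d)"
proof (cases "pd \<mu> d")
  case None
  then show ?thesis using strict_linear_on_irrefl[OF doctor_strict_linear[OF d], of None] by simp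
next
  case (Some h)
  then have dh: "(d, h) \<in> \<mu>" using pd_eq_Some_iff[OF matching] by blast
  then have "Pd d (Some h) None" using \<mu>_memD unfolding acceptable_def by blast
  moreover have "h \<in> H" using dh matching_subset[OF matching] by blast
  ultimately show ?thesis
    using Some strict_linear_on_asym[OF doctor_strict_linear[OF d], of "Some h" None] by simp
qed

lemma improving_if_displaced:
  assumes eh: "(e, h) \<in> \<mu>" and dh: "(d, h) \<in> \<mu>'" and "e \<noteq> d"
    and eh': "(e, h) \<in> \<nu>'" and pref: "Ph h (Some e) (Some d)"
  shows "e \<in> improving"
proof -
  have e: "e \<in> D" and h: "h \<in> H" using eh matching_subset[OF matching] by auto
  have "ph \<mu>' h = Some d" using dh ph_eq_Some_iff[OF matching'] by blast
  then have "\<not> Pd e (Some h) (pd \<mu>' e)"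
    using not_blocks_\<mu>'[OF e h eh'] \<mu>_memD[OF eh] pref unfolding blocks_def by auto
  moreover have "pd \<mu>' e \<noteq> Some h"
    using \<open>e \<noteq> d\<close> dh pd_eq_Some_iff[OF matching'] matching_injective[OF matching'] by blast
  moreover have "pd \<mu> e = Some h" using eh pd_eq_Some_iff[OF matching] by blast
  ultimately show ?thesis
    using strict_linear_on_total[OF doctor_strict_linear[OF e] pd_range[OF matching'], of "Some h"] e h
    unfolding improving_def by auto
qed

lemma improving_partner:
  assumes d: "d \<in> improving"
  shows "\<exists>h e. (d, h) \<in> \<mu>' \<and> (e, h) \<in> \<mu> \<and> e \<in> improving"
proof -
  have dD: "d \<in> D" and pref: "Pd d (pd \<mu>' d) (pd \<mu> d)" using d unfolding improving_def by auto
  then obtain h where \<mu>'_d: "pd \<mu>' d = Some h" using not_prefers_unmatched by (cases "pd \<mu>' d") auto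
  then have dh: "(d, h) \<in> \<mu>'" using pd_eq_Some_iff[OF matching'] by blast
  then have h: "h \<in> H" using matching_subset[OF matching'] by blast
  have dh': "(d, h) \<in> \<nu>'" "acceptable (Ph h) d" using \<mu>'_memD[OF dh] by auto
  have better: "Pd d (Some h) (pd \<mu> d)" using pref \<mu>'_d by simp
  then have not_pref: "\<not> Ph h (Some d) (ph \<mu> h)"
    using not_blocks_\<mu>[OF dD h] unfolding blocks_def by blast
  then obtain e where \<mu>_h: "ph \<mu> h = Some e"
    using dh'(2) unfolding acceptable_def by (cases "ph \<mu> h") auto
  then have eh: "(e, h) \<in> \<mu>" using ph_eq_Some_iff[OF matching] by blast
  then have eD: "e \<in> D" and e_\<mu>: "pd \<mu> e = Some h"
    using matching_subset[OF matching] pd_eq_Some_iff[OF matching] by auto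
  have "e \<noteq> d" using better e_\<mu> strict_linear_on_irrefl[OF doctor_strict_linear[OF dD], of "Some h"] h
    by auto
  then have "Ph h (Some e) (Some d)"
    using not_pref \<mu>_h eD dD
      strict_linear_on_total[OF hospital_strict_linear[OF h], of "Some e" "Some d"]
    by auto
  moreover have "(e, h) \<in> \<nu>'"
    using interview_kept \<mu>_memD[OF eh] dh'(1) \<open>Ph h (Some e) (Some d)\<close> by blast
  ultimately have "e \<in> improving" using improving_if_displaced[OF eh dh \<open>e \<noteq> d\<close>] by blast
  with dh eh show ?thesis by blast
qed

definition successor :: "'d \<Rightarrow> 'd" where
  "successor d = the (ph \<mu> (the (pd \<mu>' d)))"

lemma successor_improving:
  assumes "d \<in> improving"
  shows "\<exists>h. (d, h) \<in> \<mu>' \<and> (successor d, h) \<in> \<mu> \<and> successor d \<in> improving"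
proof -
  obtain h e where "(d, h) \<in> \<mu>'" "(e, h) \<in> \<mu>" "e \<in> improving"
    using improving_partner[OF assms] by blast
  moreover from this have "pd \<mu>' d = Some h" "ph \<mu> h = Some e"
    using pd_eq_Some_iff[OF matching'] ph_eq_Some_iff[OF matching] by auto
  then have "successor d = e" unfolding successor_def by simp
  ultimately show ?thesis by blast
qed

lemma successor_image: "successor ` improving = improving"
proof (rule endo_inj_surj)
  show "finite improving"
    using finite_subset[OF improving_subset finite_D] .
  show "successor ` improving \<subseteq> improving" using successor_improving by blast
  show "inj_on successor improving"
  proof (rule inj_onI)
    fix d d' assume "d \<in> improving" "d' \<in> improving" "successor d = successor d'"
    then obtain h h' where "(d, h) \<in> \<mu>'" "(d', h') \<in> \<mu>'"
      "(successor d, h) \<in> \<mu>" "(successor d, h') \<in> \<mu>"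
      using successor_improving by metis
    then show "d = d'" using matching matching' unfolding matching_def by metis
  qed
qed

lemma improving_matched: "d \<in> improving \<Longrightarrow> \<exists>h. (d, h) \<in> \<mu>"
  using successor_improving successor_image by (metis imageE)

lemma improving_hospitals:
  "(\<exists>d\<in>improving. (d, h) \<in> \<mu>') \<longleftrightarrow> (\<exists>e\<in>improving. (e, h) \<in> \<mu>)"
proof
  assume "\<exists>d\<in>improving. (d, h) \<in> \<mu>'"
  then show "\<exists>e\<in>improving. (e, h) \<in> \<mu>"
    using successor_improving matching' unfolding matching_def by metis
next
  assume "\<exists>e\<in>improving. (e, h) \<in> \<mu>"
  then obtain d where "d \<in> improving" "(successor d, h) \<in> \<mu>"
    using successor_image by (metis imageE)
  then show "\<exists>d\<in>improving. (d, h) \<in> \<mu>'"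
    using successor_improving matching unfolding matching_def by metis
qed

lemma improving_interview:
  assumes d: "d \<in> improving" and dh: "(d, h) \<in> \<mu>'"
  shows "(d, h) \<in> \<nu>"
proof (rule ccontr)
  assume not_\<nu>: "(d, h) \<notin> \<nu>"
  have dD: "d \<in> D" using d improving_subset by blast
  have h: "h \<in> H" using dh matching' unfolding matching_def by blast
  have dh': "(d, h) \<in> \<nu>'" "acceptable (Pd d) h" "acceptable (Ph h) d" using \<mu>'_memD[OF dh] by auto
  let ?S = "hset \<nu>' h \<union> hset \<nu> h"
  have "?S \<subseteq> D" using pairwise_stable_hset_subset[OF ps] pairwise_stable_hset_subset[OF ps'] by blast
  note S = this finite_subset[OF this finite_D]
  have "d \<in> choice (Ph h) (\<iota> h) ?S" using hospitals_keep_\<nu>'[OF h] dh'(1) unfolding hset_def by simp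
  then have "d \<in> choice (Ph h) (\<iota> h) (insert d (hset \<nu> h))"
    by (rule choice_mem_subset[OF market_hospital_linear[OF market h] S, rotated 2])
      (use dh'(1) in \<open>auto simp: hset_def\<close>)
  moreover have "h \<in> choice (Pd d) (\<kappa> d) (insert h (dset \<nu> d))"
  proof -
    obtain h0 where dh0: "(d, h0) \<in> \<mu>" using improving_matched[OF d] by blast
    then have "pd \<mu> d = Some h0" "pd \<mu>' d = Some h"
      using dh pd_eq_Some_iff[OF matching] pd_eq_Some_iff[OF matching'] by auto
    then have "Pd d (Some h) (Some h0)" using d unfolding improving_def by simp
    moreover have "h0 \<in> dset \<nu> d" "acceptable (Pd d) h0"
      using \<mu>_memD[OF dh0] unfolding dset_def by auto
    moreover have "dset \<nu> d \<subseteq> H" "finite (dset \<nu> d)"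
      using pairwise_stable_dset_subset[OF ps] finite_subset[OF _ finite_H] by auto
    ultimately show ?thesis
      using choice_insert_if_beats[OF market_doctor_linear[OF market dD]]
        pairwise_stable_card_dset[OF ps dD] h dh'(2) by blast
  qed
  ultimately show False using pairwise_stable_no_block[OF ps dD h not_\<nu>] by blast
qed

definition hybrid :: "('d \<times> 'h) set" where
  "hybrid = {p \<in> \<mu>'. fst p \<in> improving} \<union> {p \<in> \<mu>. fst p \<notin> improving}"

lemma hybrid_mem_iff: "(d, h) \<in> hybrid \<longleftrightarrow> (if d \<in> improving then (d, h) \<in> \<mu>' else (d, h) \<in> \<mu>)"
  unfolding hybrid_def by auto

lemma hybrid_mem_iff_hospital:
  "(d, h) \<in> hybrid \<longleftrightarrow> (if \<exists>e\<in>improving. (e, h) \<in> \<mu> then (d, h) \<in> \<mu>' else (d, h) \<in> \<mu>)"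
  using improving_hospitals[of h] matching matching' unfolding hybrid_mem_iff matching_def by metis

lemma matching_hybrid: "matching D H hybrid"
  unfolding matching_def
proof (intro conjI allI impI)
  show "hybrid \<subseteq> D \<times> H"
    using matching_subset[OF matching] matching_subset[OF matching'] unfolding hybrid_def by blast
next
  fix d h h' assume "(d, h) \<in> hybrid" "(d, h') \<in> hybrid"
  then have "(d, h) \<in> \<mu>' \<and> (d, h') \<in> \<mu>' \<or> (d, h) \<in> \<mu> \<and> (d, h') \<in> \<mu>"
    unfolding hybrid_mem_iff by (simp split: if_splits)
  then show "h = h'" using matching_functional[OF matching] matching_functional[OF matching'] by blast
next
  fix d d' h assume "(d, h) \<in> hybrid" "(d', h) \<in> hybrid"
  then have "(d, h) \<in> \<mu>' \<and> (d', h) \<in> \<mu>' \<or> (d, h) \<in> \<mu> \<and> (d', h) \<in> \<mu>"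
    unfolding hybrid_mem_iff_hospital by (simp split: if_splits)
  then show "d = d'" using matching_injective[OF matching] matching_injective[OF matching'] by blast
qed

lemma pd_hybrid: "pd hybrid d = (if d \<in> improving then pd \<mu>' d else pd \<mu> d)"
  by (auto intro: pd_cong simp: hybrid_mem_iff)

lemma ph_hybrid: "ph hybrid h = (if \<exists>e\<in>improving. (e, h) \<in> \<mu> then ph \<mu>' h else ph \<mu> h)"
proof (cases "\<exists>e\<in>improving. (e, h) \<in> \<mu>")
  case True
  then have "ph hybrid h = ph \<mu>' h" by (intro ph_cong) (simp only: hybrid_mem_iff_hospital if_True)
  with True show ?thesis by simp
next
  case False
  then have "ph hybrid h = ph \<mu> h" by (intro ph_cong) (simp only: hybrid_mem_iff_hospital if_False)
  with False show ?thesis by simp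
qed

lemma hybrid_restricted_ir:
  "indiv_rational (restricted_doctor_prefs Pd \<nu>) (restricted_hospital_prefs Ph \<nu>) hybrid"
  unfolding indiv_rational_restricted_iff indiv_rational_def
  using improving_interview \<mu>_memD \<mu>'_memD unfolding acceptable_def
  by (auto simp: hybrid_mem_iff split: if_splits)

lemma prefers_to_\<mu>_if_prefers_to_hybrid:
  assumes d: "d \<in> D" and h: "h \<in> H" and pref: "Pd d (Some h) (pd hybrid d)"
  shows "Pd d (Some h) (pd \<mu> d)"
proof (cases "d \<in> improving")
  case True
  then show ?thesis
    using pref pd_hybrid h
      strict_linear_on_trans[OF doctor_strict_linear[OF d] _ pd_range[OF matching']
        pd_range[OF matching]]
    unfolding improving_def by auto
qed (use pref pd_hybrid in auto)

lemma hybrid_restricted_stable: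
  "stable D H (restricted_doctor_prefs Pd \<nu>) (restricted_hospital_prefs Ph \<nu>) hybrid"
  unfolding stable_def blocks_restricted_iff[OF matching_hybrid hybrid_restricted_ir]
proof (intro conjI matching_hybrid ballI notI)
  fix d h assume d: "d \<in> D" and h: "h \<in> H"
    and "(d, h) \<in> \<nu> \<and> acceptable (Pd d) h \<and> acceptable (Ph h) d \<and> blocks Pd Ph hybrid d h"
  then have dh: "(d, h) \<in> \<nu>" "acceptable (Pd d) h" "acceptable (Ph h) d"
    and d_pref: "Pd d (Some h) (pd hybrid d)" and h_pref: "Ph h (Some d) (ph hybrid h)"
    unfolding blocks_def by auto
  note sl = doctor_strict_linear[OF d]
  have h_opt: "Some h \<in> Some ` H \<union> {None}" using h by blast
  have better_than_\<mu>: "Pd d (Some h) (pd \<mu> d)"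
    by (rule prefers_to_\<mu>_if_prefers_to_hybrid[OF d h d_pref])
  then have "\<not> Ph h (Some d) (ph \<mu> h)" using not_blocks_\<mu>[OF d h] unfolding blocks_def by blast
  then have held: "\<exists>e\<in>improving. (e, h) \<in> \<mu>" using h_pref ph_hybrid by metis
  then obtain d0 where d0: "d0 \<in> improving" "(d0, h) \<in> \<mu>'" using improving_hospitals by blast
  then have "ph \<mu>' h = Some d0" using ph_eq_Some_iff[OF matching'] by blast
  then have h_pref': "Ph h (Some d) (Some d0)" using h_pref ph_hybrid held by simp
  then have dh': "(d, h) \<in> \<nu>'" using interview_kept[OF dh(1)] \<mu>'_memD[OF d0(2)] by blast
  have not_better_\<mu>': "\<not> Pd d (Some h) (pd \<mu>' d)"
    using not_blocks_\<mu>'[OF d h dh' dh(2,3)] h_pref' \<open>ph \<mu>' h = Some d0\<close> unfolding blocks_def by auto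
  show False
  proof (cases "d \<in> improving")
    case True
    then show False using not_better_\<mu>' d_pref pd_hybrid by auto
  next
    case False
    then have "pd \<mu>' d \<noteq> Some h"
      using d0 pd_eq_Some_iff[OF matching'] matching_injective[OF matching'] by blast
    then have "Pd d (pd \<mu>' d) (Some h)"
      using not_better_\<mu>' strict_linear_on_total[OF sl pd_range[OF matching'] h_opt] by blast
    then have "Pd d (pd \<mu>' d) (pd \<mu> d)"
      using better_than_\<mu> strict_linear_on_trans[OF sl pd_range[OF matching'] h_opt
          pd_range[OF matching]] by blast
    then show False using False d unfolding improving_def by blast
  qed
qed

lemma improving_empty: "improving = {}"
proof (rule ccontr)
  assume "improving \<noteq> {}"
  then obtain d where d: "d \<in> improving" by blast
  then have dD: "d \<in> D" and pref: "Pd d (pd \<mu>' d) (pd \<mu> d)" unfolding improving_def by auto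
  have "pd \<mu> d = pd hybrid d \<or> restrict_pref (Pd d) (dset \<nu> d) (pd \<mu> d) (pd hybrid d)"
    using optimal hybrid_restricted_ir hybrid_restricted_stable dD
    unfolding doctor_optimal_stable_def by blast
  moreover have "pd hybrid d = pd \<mu>' d" using pd_hybrid d by simp
  ultimately have "pd \<mu> d = pd \<mu>' d \<or> Pd d (pd \<mu> d) (pd \<mu>' d)"
    using restrict_pref_iff[OF pd_restricted_outcomes[OF matching_hybrid hybrid_restricted_ir, of d]]
    by auto
  then show False
    using pref strict_linear_on_irrefl strict_linear_on_asym doctor_strict_linear[OF dD]
      pd_range[OF matching] pd_range[OF matching'] by metis
qed

theorem no_doctor_improves: "d \<in> D \<Longrightarrow> pd \<mu> d = pd \<mu>' d \<or> Pd d (pd \<mu> d) (pd \<mu>' d)"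
  using weakly_prefers_if_not_improving improving_empty by blast

end

theorem theorem1:
  fixes D :: "'d set" and H :: "'h set"
    and Pd :: "'d \<Rightarrow> 'h option \<Rightarrow> 'h option \<Rightarrow> bool"
    and Ph :: "'h \<Rightarrow> 'd option \<Rightarrow> 'd option \<Rightarrow> bool"
    and \<iota> :: "'h \<Rightarrow> nat" and \<kappa> \<kappa>' :: "'d \<Rightarrow> nat"
  assumes "market D H Pd Ph"
    and "adequate D H Pd Ph \<iota> \<kappa>"
    and "\<forall>d\<in>D. \<kappa>' d \<ge> \<kappa> d"
  shows "\<forall>d\<in>D. pd (ik_matching D H Pd Ph \<iota> \<kappa>) d = pd (ik_matching D H Pd Ph \<iota> \<kappa>') d
            \<or> Pd d (pd (ik_matching D H Pd Ph \<iota> \<kappa>) d) (pd (ik_matching D H Pd Ph \<iota> \<kappa>') d)"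
proof -
  let ?\<nu> = "step1 D H Pd Ph \<iota> \<kappa>" and ?\<nu>' = "step1 D H Pd Ph \<iota> \<kappa>'"
  interpret interview_expansion D H Pd Ph \<iota> \<kappa> \<kappa>' ?\<nu> ?\<nu>'
    "ik_matching D H Pd Ph \<iota> \<kappa>" "ik_matching D H Pd Ph \<iota> \<kappa>'"
  proof
    show "market D H Pd Ph" by (rule assms(1))
    show "pairwise_stable D H Pd Ph \<iota> \<kappa> ?\<nu>" "pairwise_stable D H Pd Ph \<iota> \<kappa>' ?\<nu>'"
      by (rule step1_spec(1)[OF assms(1)])+
    show "choice (Ph h) (\<iota> h) (hset ?\<nu>' h \<union> hset ?\<nu> h) = hset ?\<nu>' h" if "h \<in> H" for h
      by (rule hospital_optimal_belowD[OF step1_spec(2) assms(3) step1_spec(1) that]) (rule assms(1))+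
    show "stable D H Pd Ph (ik_matching D H Pd Ph \<iota> \<kappa>)"
      using assms(2) unfolding adequate_def .
  qed (rule ik_matching_doctor_optimal[OF assms(1)])+
  show ?thesis using no_doctor_improves by blast
qed

end
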